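(* Let $G$ be a connected claw-free graph of order $n$. Then $\gamma_{oir2}(G)\geq n/2$. Moreover, $\gamma_{oir2}(G)=n/2$ if and only if $G$ is isomorphic to a graph in the family $\mathcal{G}=\mathcal{G}_1\cup\mathcal{G}_2\cup\mathcal{G}_3$ described in the context.
   Context: All graphs are finite and simple. For a graph $G$, a function $f:V(G)\to\mathcal{P}(\{1,2\})$ is a 2-rainbow dominating function if every vertex $v$ with $f(v)=\emptyset$ satisfies $\bigcup_{u\in N(v)}f(u)=\{1,2\}$. It is an outer-independent 2-rainbow dominating function (OI2RD function) if, in addition, the set $\{v: f(v)=\emptyset\}$ is independent. The weight of $f$ is $\sum_{v\in V(G)}|f(v)|$, and $\gamma_{oir2}(G)$ is the minimum weight of an OI2RD function of $G$. A graph is claw-free if it has no induced subgraph isomorphic to $K_{1,3}$. For $k\geq 1$, a $k$-unit is the graph with vertices $v_1,\dots,v_k,u_1,\dots,u_{k-1}$ whose edges are $v_iv_{i+1}$ and $u_iv_i$, $u_iv_{i+1}$ for $1\le i\le k-1$ (a path $v_1\cdots v_k$ with a triangle on each path edge; it has $k-1$ triangles; a 1-unit is $K_1$). Call $v_1$ and $v_k$ its first and last path vertices. $\mathcal{G}_1$: take integers $r\ge1$ and $k_1,\dots,k_r\ge1$ with $k_1+\dots+k_r$ even, take disjoint units $U_1,\dots,U_r$ where $U_j$ is a $k_j$-unit with path $v^j_1\cdots v^j_{k_j}$, and add new vertices $w_1,\dots,w_r$, where $w_j$ is adjacent exactly to $v^j_{k_j}$ and $v^{j+1}_1$ (indices of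 units taken modulo $r$, so $w_r$ is adjacent to $v^r_{k_r}$ and $v^1_1$). (This includes the cycles $C_n$ with $n\equiv 0 \pmod 4$, when all $k_j=1$.) $\mathcal{G}_2$: take a $k$-unit with $k\ge2$ even (so the number of triangles $k-1$ is odd) and add one new vertex adjacent exactly to $v_1$ and $v_k$. $\mathcal{G}_3$: take a cycle $x_1x_2\cdots x_{2q}x_1$ of even length $2q\ge4$ and, for each cycle edge $x_ix_{i+1}$ (indices mod $2q$), add a new vertex adjacent exactly to $x_i$ and $x_{i+1}$ (so the number of triangles is even). *)

theory Defs
  imports Complex_Main
begin

definition simple_graph :: "'a set \<Rightarrow> ('a \<Rightarrow> 'a \<Rightarrow> bool) \<Rightarrow> bool" where
  "simple_graph V E \<longleftrightarrow> finite V \<and> (\<forall>u v. E u v \<longrightarrow> u \<in> V \<and> v \<in> V)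
     \<and> (\<forall>u v. E u v \<longrightarrow> E v u) \<and> (\<forall>v. \<not> E v v)"

definition connected_graph :: "'a set \<Rightarrow> ('a \<Rightarrow> 'a \<Rightarrow> bool) \<Rightarrow> bool" where
  "connected_graph V E \<longleftrightarrow> V \<noteq> {} \<and> (\<forall>u\<in>V. \<forall>v\<in>V. E\<^sup>*\<^sup>* u v)"

definition claw_free :: "'a set \<Rightarrow> ('a \<Rightarrow> 'a \<Rightarrow> bool) \<Rightarrow> bool" where
  "claw_free V E \<longleftrightarrow> \<not> (\<exists>a\<in>V. \<exists>b\<in>V. \<exists>c\<in>V. \<exists>d\<in>V.
      E a b \<and> E a c \<and> E a d \<and> b \<noteq> c \<and> b \<noteq> d \<and> c \<noteq> d
      \<and> \<not> E b c \<and> \<not> E b d \<and> \<not> E c d)"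

definition graph_iso :: "'a set \<Rightarrow> ('a \<Rightarrow> 'a \<Rightarrow> bool) \<Rightarrow> 'b set \<Rightarrow> ('b \<Rightarrow> 'b \<Rightarrow> bool) \<Rightarrow> bool" where
  "graph_iso V E V' E' \<longleftrightarrow> (\<exists>f. bij_betw f V V' \<and> (\<forall>u\<in>V. \<forall>v\<in>V. E u v \<longleftrightarrow> E' (f u) (f v)))"

definition oi2rd :: "'a set \<Rightarrow> ('a \<Rightarrow> 'a \<Rightarrow> bool) \<Rightarrow> ('a \<Rightarrow> nat set) \<Rightarrow> bool" where
  "oi2rd V E f \<longleftrightarrow>
     (\<forall>v\<in>V. f v \<subseteq> {1, 2})
   \<and> (\<forall>v\<in>V. f v = {} \<longrightarrow> (\<Union>u\<in>{u\<in>V. E v u}. f u) = {1, 2})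
   \<and> (\<forall>u\<in>V. \<forall>v\<in>V. f u = {} \<and> f v = {} \<longrightarrow> \<not> E u v)"

definition weight :: "'a set \<Rightarrow> ('a \<Rightarrow> nat set) \<Rightarrow> nat" where
  "weight V f = (\<Sum>v\<in>V. card (f v))"

definition gamma_oir2 :: "'a set \<Rightarrow> ('a \<Rightarrow> 'a \<Rightarrow> bool) \<Rightarrow> nat" where
  "gamma_oir2 V E = (LEAST w. \<exists>f. oi2rd V E f \<and> weight V f = w)"

text \<open>Vertices: GP j i is path vertex v^(j)_(i+1) of unit j (0-indexed),
  GU j i is the triangle vertex u^(j)_(i+1), GW j is the connector w_(j+1).\<close>

datatype gv = GP nat nat | GU nat nat | GW nat

definition sym_rel :: "('b \<Rightarrow> 'b \<Rightarrow> bool) \<Rightarrow> 'b \<Rightarrow> 'b \<Rightarrow> bool" where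
  "sym_rel R x y \<longleftrightarrow> R x y \<or> R y x"

definition G1V :: "nat \<Rightarrow> (nat \<Rightarrow> nat) \<Rightarrow> gv set" where
  "G1V r k = {GP j i | j i. j < r \<and> i < k j} \<union> {GU j i | j i. j < r \<and> Suc i < k j}
      \<union> {GW j | j. j < r}"

definition G1A :: "nat \<Rightarrow> (nat \<Rightarrow> nat) \<Rightarrow> gv \<Rightarrow> gv \<Rightarrow> bool" where
  "G1A r k x y \<longleftrightarrow>
     (\<exists>j<r. \<exists>i. Suc i < k j \<and>
        ((x = GP j i \<and> y = GP j (Suc i)) \<or> (x = GU j i \<and> y = GP j i)
         \<or> (x = GU j i \<and> y = GP j (Suc i))))
   \<or> (\<exists>j<r. x = GW j \<and> (y = GP j (k j - 1) \<or> y = GP (Suc j mod r) 0))"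

definition G1E :: "nat \<Rightarrow> (nat \<Rightarrow> nat) \<Rightarrow> gv \<Rightarrow> gv \<Rightarrow> bool" where
  "G1E r k = sym_rel (G1A r k)"

definition G2V :: "nat \<Rightarrow> gv set" where
  "G2V k = {GP 0 i | i. i < k} \<union> {GU 0 i | i. Suc i < k} \<union> {GW 0}"

definition G2A :: "nat \<Rightarrow> gv \<Rightarrow> gv \<Rightarrow> bool" where
  "G2A k x y \<longleftrightarrow>
     (\<exists>i. Suc i < k \<and>
        ((x = GP 0 i \<and> y = GP 0 (Suc i)) \<or> (x = GU 0 i \<and> y = GP 0 i)
         \<or> (x = GU 0 i \<and> y = GP 0 (Suc i))))
   \<or> (x = GW 0 \<and> (y = GP 0 0 \<or> y = GP 0 (k - 1)))"

definition G2E :: "nat \<Rightarrow> gv \<Rightarrow> gv \<Rightarrow> bool" where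
  "G2E k = sym_rel (G2A k)"

definition G3V :: "nat \<Rightarrow> gv set" where
  "G3V q = {GP 0 i | i. i < 2 * q} \<union> {GU 0 i | i. i < 2 * q}"

definition G3A :: "nat \<Rightarrow> gv \<Rightarrow> gv \<Rightarrow> bool" where
  "G3A q x y \<longleftrightarrow>
     (\<exists>i<2 * q. (x = GP 0 i \<and> y = GP 0 (Suc i mod (2 * q)))
        \<or> (x = GU 0 i \<and> y = GP 0 i) \<or> (x = GU 0 i \<and> y = GP 0 (Suc i mod (2 * q))))"

definition G3E :: "nat \<Rightarrow> gv \<Rightarrow> gv \<Rightarrow> bool" where
  "G3E q = sym_rel (G3A q)"

definition in_family_G :: "'a set \<Rightarrow> ('a \<Rightarrow> 'a \<Rightarrow> bool) \<Rightarrow> bool" where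
  "in_family_G V E \<longleftrightarrow>
     (\<exists>r k. r \<ge> 1 \<and> (\<forall>j<r. k j \<ge> 1) \<and> even (\<Sum>j<r. k j) \<and> graph_iso V E (G1V r k) (G1E r k))
   \<or> (\<exists>k. k \<ge> 2 \<and> even k \<and> graph_iso V E (G2V k) (G2E k))
   \<or> (\<exists>q. q \<ge> 2 \<and> graph_iso V E (G3V q) (G3E q))"

end

theory Submission
  imports Defs
begin

text \<open>Let \<open>f\<close> be a minimum OI2RD function, \<open>S = f\<^sup>-\<^sup>1(\<emptyset>)\<close> and \<open>T = V - S\<close>. The
  neighbourhood of each \<open>s \<in> S\<close> carries weight at least 2, while every vertex has at most two
  neighbours in the independent set \<open>S\<close> (otherwise there is a claw); double counting the
  \<open>S\<close>--\<open>T\<close> edges gives \<open>2|S| \<le> 2 w(f)\<close>, and \<open>|T| \<le> w(f)\<close>, so \<open>n \<le> 2 w(f)\<close>.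
  In the case of equality each \<open>s \<in> S\<close> has exactly two neighbours, each \<open>t \<in> T\<close> exactly two
  neighbours in \<open>S\<close>, and \<open>|f t| = 1\<close>. Walking alternately through \<open>T\<close> and \<open>S\<close> then runs
  around a single cycle \<open>x\<^sub>0 \<dots> x\<^sub>m\<^sub>-\<^sub>1\<close> carrying an ear \<open>s\<^sub>i\<close> on every pair \<open>x\<^sub>i x\<^sub>i\<^sub>+\<^sub>1\<close>;
  connectivity makes it cover \<open>G\<close>, claw-freeness forbids all edges except possibly the cycle
  edges \<open>x\<^sub>i x\<^sub>i\<^sub>+\<^sub>1\<close>, and the labels \<open>{1}\<close>, \<open>{2}\<close> must alternate along the cycle, so \<open>m\<close> is
  even. Cutting such an ear cycle at its missing cycle edges gives a graph of \<open>\<G>\<^sub>1\<close> (\<open>\<G>\<^sub>2\<close> is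
  the case of a single unit), and with no cycle edge missing it is a graph of \<open>\<G>\<^sub>3\<close>.
  Conversely, labelling the cycle vertices alternately \<open>{1}\<close> and \<open>{2}\<close> is an OI2RD function
  of weight \<open>m = n/2\<close>.\<close>

lemma graph_iso_sym:
  assumes "graph_iso V E V' E'" shows "graph_iso V' E' V E"
proof -
  obtain f where f: "bij_betw f V V'" "\<forall>u\<in>V. \<forall>v\<in>V. E u v \<longleftrightarrow> E' (f u) (f v)"
    using assms unfolding graph_iso_def by blast
  let ?g = "inv_into V f"
  have g: "bij_betw ?g V' V" using f(1) by (rule bij_betw_inv_into)
  have "\<forall>u\<in>V'. \<forall>v\<in>V'. E' u v \<longleftrightarrow> E (?g u) (?g v)"
  proof (intro ballI)
    fix u v assume u: "u \<in> V'" and v: "v \<in> V'"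
    have "?g u \<in> V" "?g v \<in> V" using g u v by (auto simp: bij_betw_def)
    moreover have "f (?g u) = u" "f (?g v) = v" using f(1) u v
      by (auto simp: bij_betw_def intro: f_inv_into_f)
    ultimately show "E' u v \<longleftrightarrow> E (?g u) (?g v)" using f(2) by metis
  qed
  then show ?thesis using g unfolding graph_iso_def by blast
qed

lemma graph_iso_trans:
  assumes "graph_iso V E V' E'" "graph_iso V' E' V'' E''" shows "graph_iso V E V'' E''"
proof -
  obtain f where f: "bij_betw f V V'" "\<forall>u\<in>V. \<forall>v\<in>V. E u v \<longleftrightarrow> E' (f u) (f v)"
    using assms(1) unfolding graph_iso_def by blast
  obtain g where g: "bij_betw g V' V''" "\<forall>u\<in>V'. \<forall>v\<in>V'. E' u v \<longleftrightarrow> E'' (g u) (g v)"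
    using assms(2) unfolding graph_iso_def by blast
  have "bij_betw (g \<circ> f) V V''" using f(1) g(1) by (rule bij_betw_trans)
  moreover have "\<forall>u\<in>V. \<forall>v\<in>V. E u v \<longleftrightarrow> E'' ((g \<circ> f) u) ((g \<circ> f) v)"
    using f g bij_betwE[OF f(1)] by auto
  ultimately show ?thesis unfolding graph_iso_def by blast
qed

lemma graph_iso_by_inverse:
  assumes "bij_betw g V' V" "\<forall>a\<in>V'. \<forall>b\<in>V'. E (g a) (g b) \<longleftrightarrow> E' a b"
  shows "graph_iso V E V' E'"
proof -
  have "graph_iso V' E' V E" unfolding graph_iso_def using assms by (metis (full_types))
  then show ?thesis by (rule graph_iso_sym)
qed

lemma graph_iso_card_eq: "graph_iso V E V' E' \<Longrightarrow> card V = card V'"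
  unfolding graph_iso_def by (auto intro: bij_betw_same_card)

lemma oi2rd_graph_iso_transfer:
  assumes "graph_iso V E V' E'" "oi2rd V' E' g"
  shows "\<exists>f. oi2rd V E f \<and> weight V f = weight V' g"
proof -
  obtain h where h: "bij_betw h V V'" "\<forall>u\<in>V. \<forall>v\<in>V. E u v \<longleftrightarrow> E' (h u) (h v)"
    using assms(1) unfolding graph_iso_def by blast
  have hV: "\<And>v. v \<in> V \<Longrightarrow> h v \<in> V'" using h(1) by (auto simp: bij_betw_def)
  have nbrs: "h ` {u\<in>V. E v u} = {u'\<in>V'. E' (h v) u'}" if v: "v \<in> V" for v
  proof
    show "h ` {u\<in>V. E v u} \<subseteq> {u'\<in>V'. E' (h v) u'}" using h(2) v hV by auto
    show "{u'\<in>V'. E' (h v) u'} \<subseteq> h ` {u\<in>V. E v u}"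
    proof
      fix u' assume u': "u' \<in> {u'\<in>V'. E' (h v) u'}"
      then obtain u where "u \<in> V" "h u = u'" using h(1) by (auto simp: bij_betw_def)
      then show "u' \<in> h ` {u\<in>V. E v u}" using h(2) v u' by auto
    qed
  qed
  have "oi2rd V E (g \<circ> h)"
    unfolding oi2rd_def
  proof (intro conjI ballI impI)
    fix v assume "v \<in> V" then show "(g \<circ> h) v \<subseteq> {1,2}" using assms(2) hV unfolding oi2rd_def by auto
  next
    fix v assume v: "v \<in> V" and e: "(g \<circ> h) v = {}"
    have "(\<Union>u\<in>{u\<in>V. E v u}. (g \<circ> h) u) = (\<Union>u'\<in>h ` {u\<in>V. E v u}. g u')" by auto
    also have "\<dots> = (\<Union>u'\<in>{u'\<in>V'. E' (h v) u'}. g u')" using nbrs v by simp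
    also have "\<dots> = {1,2}" using assms(2) hV v e unfolding oi2rd_def by auto
    finally show "(\<Union>u\<in>{u\<in>V. E v u}. (g \<circ> h) u) = {1,2}" .
  next
    fix u v assume "u \<in> V" "v \<in> V" "(g \<circ> h) u = {} \<and> (g \<circ> h) v = {}"
    then show "\<not> E u v" using assms(2) hV h(2) unfolding oi2rd_def by auto
  qed
  moreover have "weight V (g \<circ> h) = weight V' g"
    unfolding weight_def using sum.reindex_bij_betw[OF h(1), of "\<lambda>x. card (g x)"] by simp
  ultimately show ?thesis by blast
qed

lemma gamma_oir2_attained: "\<exists>f. oi2rd V E f \<and> weight V f = gamma_oir2 V E"
proof -
  have "oi2rd V E (\<lambda>_. {1})" unfolding oi2rd_def by auto
  then have "\<exists>w. \<exists>f. oi2rd V E f \<and> weight V f = w" by blast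
  then show ?thesis unfolding gamma_oir2_def by (rule LeastI_ex)
qed

lemma gamma_oir2_le: "oi2rd V E f \<Longrightarrow> gamma_oir2 V E \<le> weight V f"
  unfolding gamma_oir2_def by (rule Least_le) blast

lemma claw_free_card_independent_nbrs:
  assumes cf: "claw_free V E" and a: "a \<in> V" and A: "A \<subseteq> V" "\<forall>b\<in>A. E a b"
    and ind: "\<forall>b\<in>A. \<forall>c\<in>A. \<not> E b c"
  shows "card A \<le> 2"
proof (rule ccontr)
  assume "\<not> card A \<le> 2"
  then have "3 \<le> card A" by simp
  then obtain B where B: "B \<subseteq> A" "card B = 3" by (meson obtain_subset_with_card_n)
  then obtain x y z where xyz: "B = {x,y,z}" "x \<noteq> y" "y \<noteq> z" "x \<noteq> z" by (auto simp: card_3_iff)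
  then have "x \<in> V" "y \<in> V" "z \<in> V" "E a x" "E a y" "E a z" "\<not> E x y" "\<not> E x z" "\<not> E y z"
    using A ind B(1) by auto
  then show False using cf a xyz unfolding claw_free_def by blast
qed

lemma sum_nbrs_swap:
  assumes "finite V" "finite S"
  shows "(\<Sum>s\<in>S. \<Sum>u\<in>{u\<in>V. E s u}. w u) = (\<Sum>u\<in>V. w u * card {s\<in>S. E s u})"
proof -
  have "(\<Sum>s\<in>S. \<Sum>u\<in>{u\<in>V. E s u}. w u) = (\<Sum>s\<in>S. \<Sum>u\<in>V. if E s u then w u else 0)"
    using assms(1) by (simp add: sum.inter_filter)
  also have "\<dots> = (\<Sum>u\<in>V. \<Sum>s\<in>S. if E s u then w u else 0)" by (rule sum.swap)
  also have "\<dots> = (\<Sum>u\<in>V. w u * card {s\<in>S. E s u})"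
    using assms(2) by (simp add: sum.inter_filter[symmetric] mult.commute)
  finally show ?thesis .
qed

locale claw_free_oi2rd =
  fixes V :: "'a set" and E :: "'a \<Rightarrow> 'a \<Rightarrow> bool" and f :: "'a \<Rightarrow> nat set"
  assumes simple: "simple_graph V E" and claw_free: "claw_free V E" and oi2rd: "oi2rd V E f"
begin

definition "S = {v\<in>V. f v = {}}"
definition "nbr s = {u\<in>V. E s u}"
definition "S_nbr t = {s\<in>S. E s t}"

lemma finite_V: "finite V" using simple unfolding simple_graph_def by blast
lemma sym: "E u v \<Longrightarrow> E v u" using simple unfolding simple_graph_def by blast
lemma in_V: "E u v \<Longrightarrow> u \<in> V" "E u v \<Longrightarrow> v \<in> V" using simple unfolding simple_graph_def by blast+
lemma irrefl: "\<not> E v v" using simple unfolding simple_graph_def by blast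
lemma S_subset: "S \<subseteq> V" unfolding S_def by blast
lemma finite_S: "finite S" using finite_V S_subset finite_subset by blast
lemma S_independent: "u \<in> S \<Longrightarrow> v \<in> S \<Longrightarrow> \<not> E u v" using oi2rd unfolding oi2rd_def S_def by blast
lemma nbr_outside_S: "s \<in> S \<Longrightarrow> u \<in> nbr s \<Longrightarrow> u \<in> V - S" unfolding nbr_def using S_independent by blast

lemma f_subset: "v \<in> V \<Longrightarrow> f v \<subseteq> {1, 2}" using oi2rd unfolding oi2rd_def by blast

lemma card_f_pos: "t \<in> V - S \<Longrightarrow> 1 \<le> card (f t)"
  using f_subset[of t] finite_subset[OF f_subset] unfolding S_def
    by (auto simp: Suc_le_eq card_gt_0_iff)

lemma nbr_rainbow: "s \<in> S \<Longrightarrow> (\<Union>u\<in>nbr s. f u) = {1,2}"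
  using oi2rd S_subset unfolding oi2rd_def S_def nbr_def by blast

lemma card_S_nbr_le_2: "u \<in> V \<Longrightarrow> card (S_nbr u) \<le> 2"
  using claw_free_card_independent_nbrs[OF claw_free, of u "S_nbr u"] S_subset sym S_independent
  unfolding S_nbr_def by blast

lemma two_le_nbr_weight: "s \<in> S \<Longrightarrow> 2 \<le> (\<Sum>u\<in>nbr s. card (f u))"
proof -
  assume "s \<in> S"
  then have "card (\<Union>u\<in>nbr s. f u) = 2" using nbr_rainbow by simp
  moreover have "card (\<Union>u\<in>nbr s. f u) \<le> (\<Sum>u\<in>nbr s. card (f u))"
    by (rule card_UN_le) (simp add: nbr_def finite_V)
  ultimately show ?thesis by simp
qed

lemma weight_eq_sum_outside_S: "weight V f = (\<Sum>u\<in>V - S. card (f u))"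
  unfolding weight_def by (rule sum.mono_neutral_right) (use finite_V in \<open>auto simp: S_def\<close>)

lemma card_outside_S_le_weight: "card (V - S) \<le> weight V f"
  unfolding weight_eq_sum_outside_S using sum_mono[of "V - S" "\<lambda>_. 1::nat"] card_f_pos by simp

lemma double_count_S_edges:
  "(\<Sum>s\<in>S. \<Sum>u\<in>nbr s. card (f u)) = (\<Sum>u\<in>V. card (f u) * card (S_nbr u))"
  unfolding nbr_def S_nbr_def by (rule sum_nbrs_swap[OF finite_V finite_S])

lemma twice_card_S_le: "2 * card S \<le> (\<Sum>s\<in>S. \<Sum>u\<in>nbr s. card (f u))"
  using sum_mono[of S "\<lambda>_. 2::nat" "\<lambda>s. \<Sum>u\<in>nbr s. card (f u)"] two_le_nbr_weight
  by (simp add: mult.commute)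

lemma sum_S_nbr_le: "(\<Sum>u\<in>V. card (f u) * card (S_nbr u)) \<le> (\<Sum>u\<in>V. card (f u) * 2)"
  by (rule sum_mono) (simp add: card_S_nbr_le_2)

lemma sum_twice_weight: "(\<Sum>u\<in>V. card (f u) * 2) = 2 * weight V f"
  unfolding weight_def by (simp add: sum_distrib_left mult.commute)

lemma card_V_split: "card V = card S + card (V - S)"
  using card_Diff_subset[OF finite_S S_subset] card_mono[OF finite_V S_subset] by simp

theorem card_le_twice_weight: "card V \<le> 2 * weight V f"
  using twice_card_S_le double_count_S_edges sum_S_nbr_le sum_twice_weight
    card_outside_S_le_weight card_V_split by linarith

end

locale tight_oi2rd = claw_free_oi2rd +
  assumes connected: "connected_graph V E" and tight: "card V = 2 * weight V f"
begin

lemma tight_counts: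
  "card (V - S) = weight V f"
  "(\<Sum>s\<in>S. \<Sum>u\<in>nbr s. card (f u)) = (\<Sum>s\<in>S. 2)"
  "(\<Sum>u\<in>V. card (f u) * card (S_nbr u)) = (\<Sum>u\<in>V. card (f u) * 2)"
  using twice_card_S_le double_count_S_edges sum_S_nbr_le sum_twice_weight
    card_outside_S_le_weight card_V_split tight by simp_all

lemma card_f_outside_S:
  assumes t: "t \<in> V - S" shows "card (f t) = 1"
proof -
  have "(\<Sum>u\<in>V - S. 1) = (\<Sum>u\<in>V - S. card (f u))"
    using tight_counts(1) weight_eq_sum_outside_S by simp
  from sum_mono_inv[OF this card_f_pos t] show ?thesis using finite_V by simp
qed

lemma card_S_nbr:
  assumes t: "t \<in> V - S" shows "card (S_nbr t) = 2"
proof -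
  have "card (f t) * card (S_nbr t) = card (f t) * 2"
    by (rule sum_mono_inv[OF tight_counts(3)]) (use card_S_nbr_le_2 t finite_V in simp_all)
  then show ?thesis using card_f_outside_S[OF t] by simp
qed

lemma card_nbr:
  assumes s: "s \<in> S" shows "card (nbr s) = 2"
proof -
  have "2 = (\<Sum>u\<in>nbr s. card (f u))"
    by (rule sum_mono_inv[OF tight_counts(2)[symmetric]])
      (use two_le_nbr_weight s finite_S in simp_all)
  also have "\<dots> = card (nbr s)"
    using card_f_outside_S nbr_outside_S[OF s] by simp
  finally show ?thesis by simp
qed

lemma f_outside_S: "t \<in> V - S \<Longrightarrow> f t = {1} \<or> f t = {2}"
  using card_f_outside_S f_subset by (fastforce simp: card_1_singleton_iff)

lemma claw_share:
  assumes t: "t \<in> V - S" and u: "u \<in> V - S" and e: "E t u"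
    and a: "a \<in> S" "E a t" and b: "b \<in> S" "E b t" and ab: "a \<noteq> b"
  shows "E a u \<or> E b u"
proof (rule ccontr)
  assume "\<not> (E a u \<or> E b u)"
  moreover have "t \<in> V" "a \<in> V" "b \<in> V" "u \<in> V" "E t a" "E t b" "a \<noteq> u" "b \<noteq> u" "\<not> E a b"
    using t u a b S_subset sym S_independent by auto
  ultimately show False using claw_free e ab unfolding claw_free_def by blast
qed

end

text \<open>Cycle vertices \<open>x\<^sub>i = GP 0 i\<close> and ears \<open>GU 0 i\<close> adjacent to \<open>x\<^sub>i\<close> and \<open>x\<^sub>i\<^sub>+\<^sub>1 mod m\<close>; the
  cycle edge \<open>x\<^sub>i x\<^sub>i\<^sub>+\<^sub>1 mod m\<close> is present iff \<open>tri i\<close>.\<close>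

definition ear_cycleV :: "nat \<Rightarrow> gv set" where
  "ear_cycleV m = {GP 0 i | i. i < m} \<union> {GU 0 i | i. i < m}"

definition ear_cycleA :: "nat \<Rightarrow> (nat \<Rightarrow> bool) \<Rightarrow> gv \<Rightarrow> gv \<Rightarrow> bool" where
  "ear_cycleA m tri a b \<longleftrightarrow> (\<exists>i<m. (a = GP 0 i \<and> b = GP 0 (Suc i mod m) \<and> tri i)
      \<or> (a = GU 0 i \<and> b = GP 0 i) \<or> (a = GU 0 i \<and> b = GP 0 (Suc i mod m)))"

definition ear_cycleE :: "nat \<Rightarrow> (nat \<Rightarrow> bool) \<Rightarrow> gv \<Rightarrow> gv \<Rightarrow> bool" where
  "ear_cycleE m tri = sym_rel (ear_cycleA m tri)"

lemma ear_cycleE_commute: "ear_cycleE m tri a b \<longleftrightarrow> ear_cycleE m tri b a"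
  unfolding ear_cycleE_def sym_rel_def by blast

lemma ear_cycleE_PP: "p < m \<Longrightarrow> q < m \<Longrightarrow> ear_cycleE m tri (GP 0 p) (GP 0 q) \<longleftrightarrow>
   (tri p \<and> q = Suc p mod m) \<or> (tri q \<and> p = Suc q mod m)"
  unfolding ear_cycleE_def sym_rel_def ear_cycleA_def by auto

lemma ear_cycleE_UP: "ear_cycleE m tri (GU 0 p) (GP 0 q) \<longleftrightarrow> p < m \<and> (q = p \<or> q = Suc p mod m)"
  unfolding ear_cycleE_def sym_rel_def ear_cycleA_def by auto
lemma ear_cycleE_PU: "ear_cycleE m tri (GP 0 q) (GU 0 p) \<longleftrightarrow> p < m \<and> (q = p \<or> q = Suc p mod m)"
  unfolding ear_cycleE_def sym_rel_def ear_cycleA_def by auto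

lemma ear_cycleE_UU: "\<not> ear_cycleE m tri (GU 0 p) (GU 0 q)"
  unfolding ear_cycleE_def sym_rel_def ear_cycleA_def by auto

lemma ear_cycleE_cong: "(\<forall>i<m. tri i = tri' i) \<Longrightarrow> ear_cycleE m tri = ear_cycleE m tri'"
  unfolding ear_cycleE_def sym_rel_def ear_cycleA_def by (intro ext) auto

definition ear_cycle_label :: "gv \<Rightarrow> nat set" where
  "ear_cycle_label v = (case v of GP _ i \<Rightarrow> {if even i then 1 else 2} | GU _ _ \<Rightarrow> {} | GW _ \<Rightarrow> {})"

lemma ear_cycleV_eq: "ear_cycleV m = (\<lambda>i. GP 0 i) ` {..<m} \<union> (\<lambda>i. GU 0 i) ` {..<m}"
  unfolding ear_cycleV_def by auto

lemma card_ear_cycleV: "card (ear_cycleV m) = 2 * m"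
proof -
  have "card ((\<lambda>i. GP 0 i) ` {..<m} \<union> (\<lambda>i. GU 0 i) ` {..<m}) =
      card ((\<lambda>i. GP 0 i) ` {..<m}) + card ((\<lambda>i. GU 0 i) ` {..<m})"
    by (rule card_Un_disjoint) auto
  also have "\<dots> = m + m" by (simp add: card_image inj_on_def)
  finally show ?thesis unfolding ear_cycleV_eq by simp
qed

lemma weight_ear_cycle_label: "weight (ear_cycleV m) ear_cycle_label = m"
proof -
  have "weight (ear_cycleV m) ear_cycle_label =
      (\<Sum>v\<in>(\<lambda>i. GP 0 i) ` {..<m}. card (ear_cycle_label v))
      + (\<Sum>v\<in>(\<lambda>i. GU 0 i) ` {..<m}. card (ear_cycle_label v))"
    unfolding weight_def ear_cycleV_eq by (rule sum.union_disjoint) auto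
  also have "\<dots> = m" by (simp add: sum.reindex inj_on_def ear_cycle_label_def)
  finally show ?thesis .
qed

lemma oi2rd_ear_cycle_label: assumes "even m"
  shows "oi2rd (ear_cycleV m) (ear_cycleE m tri) ear_cycle_label"
  unfolding oi2rd_def
proof (intro conjI ballI impI)
  fix v assume "v \<in> ear_cycleV m" then show "ear_cycle_label v \<subseteq> {1,2}"
    unfolding ear_cycle_label_def by (auto split: gv.split)
next
  fix v assume v: "v \<in> ear_cycleV m" and "ear_cycle_label v = {}"
  then obtain i where i: "v = GU 0 i" "i < m" unfolding ear_cycleV_def ear_cycle_label_def by auto
  have par: "even (Suc i mod m) \<longleftrightarrow> \<not> even i"
  proof (cases "Suc i < m")
    case True then show ?thesis by simp
  next
    case False then have "Suc i = m" using i by simp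
    then show ?thesis using assms by auto
  qed
  have n: "GP 0 i \<in> {u \<in> ear_cycleV m. ear_cycleE m tri v u}"
    "GP 0 (Suc i mod m) \<in> {u \<in> ear_cycleV m. ear_cycleE m tri v u}"
    using i ear_cycleE_UP assms unfolding ear_cycleV_def by auto
  have "{1,2} \<subseteq> (\<Union>u\<in>{u \<in> ear_cycleV m. ear_cycleE m tri v u}. ear_cycle_label u)"
    using n par unfolding ear_cycle_label_def by (cases "even i") force+
  moreover have "(\<Union>u\<in>{u \<in> ear_cycleV m. ear_cycleE m tri v u}. ear_cycle_label u) \<subseteq> {1,2}"
    unfolding ear_cycle_label_def by (auto split: gv.split_asm if_splits)
  ultimately show "(\<Union>u\<in>{u \<in> ear_cycleV m. ear_cycleE m tri v u}. ear_cycle_label u) = {1,2}"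
    by blast
next
  fix u v assume "u \<in> ear_cycleV m" "v \<in> ear_cycleV m"
    and "ear_cycle_label u = {} \<and> ear_cycle_label v = {}"
  then show "\<not> ear_cycleE m tri u v" unfolding ear_cycleV_def ear_cycle_label_def
    using ear_cycleE_UU by auto
qed

text \<open>Laying the units of a graph in \<open>\<G>\<^sub>1\<close> end to end along a cycle, unit \<open>j\<close> occupies the
  positions from \<open>unit_start k j\<close> to \<open>unit_start k (j + 1) - 1\<close>, and the cycle edge leaving
  position \<open>p\<close> is missing exactly at the last position of a unit, where the connector \<open>w\<^sub>j\<close>
  becomes the ear.\<close>

definition unit_start :: "(nat \<Rightarrow> nat) \<Rightarrow> nat \<Rightarrow> nat" where
  "unit_start k j = (\<Sum>i<j. k i)"

definition G1_tri :: "nat \<Rightarrow> (nat \<Rightarrow> nat) \<Rightarrow> nat \<Rightarrow> bool" where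
  "G1_tri r k p \<longleftrightarrow> \<not> (\<exists>j<r. Suc p = unit_start k (Suc j))"

lemma unit_start_0[simp]: "unit_start k 0 = 0"
  and unit_start_Suc: "unit_start k (Suc j) = unit_start k j + k j"
  unfolding unit_start_def by simp_all

lemma unit_start_mono: "a \<le> b \<Longrightarrow> unit_start k a \<le> unit_start k b"
  unfolding unit_start_def by (rule sum_mono2) auto

lemma unit_start_pos_unique:
  assumes "i < k j" "i' < k j'" "unit_start k j + i = unit_start k j' + i'"
  shows "j = j' \<and> i = i'"
proof -
  have "\<not> j < j'" if "i < k j" "unit_start k j + i = unit_start k j' + i'" for j j' i i'
  proof
    assume "j < j'"
    then have "unit_start k (Suc j) \<le> unit_start k j'" by (intro unit_start_mono) simp
    then show False using that unit_start_Suc[of k j] by simp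
  qed
  then have "j = j'" using assms by (metis nat_neq_iff)
  then show ?thesis using assms by simp
qed

lemma unit_start_pos_exists:
  "p < unit_start k r \<Longrightarrow> \<exists>j<r. unit_start k j \<le> p \<and> p < unit_start k (Suc j)"
proof (induction r)
  case 0 then show ?case by simp
next
  case (Suc r)
  show ?case
  proof (cases "p < unit_start k r")
    case True then show ?thesis using Suc.IH by (metis less_SucI)
  next
    case False then show ?thesis using Suc.prems by auto
  qed
qed

definition G1_embed :: "(nat \<Rightarrow> nat) \<Rightarrow> gv \<Rightarrow> gv" where
  "G1_embed k v = (case v of GP j i \<Rightarrow> GP 0 (unit_start k j + i) | GU j i \<Rightarrow> GU 0 (unit_start k j + i)
     | GW j \<Rightarrow> GU 0 (unit_start k j + (k j - 1)))"

lemma G1E_PP: "G1E r k (GP j i) (GP j' i') \<longleftrightarrow>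
    j < r \<and> j' = j \<and> ((i' = Suc i \<and> Suc i < k j) \<or> (i = Suc i' \<and> Suc i' < k j))"
  unfolding G1E_def sym_rel_def G1A_def by auto

lemma G1E_UP: "G1E r k (GU j i) (GP j' i') \<longleftrightarrow>
    j < r \<and> Suc i < k j \<and> j' = j \<and> (i' = i \<or> i' = Suc i)"
  unfolding G1E_def sym_rel_def G1A_def by auto

lemma G1E_PU: "G1E r k (GP j' i') (GU j i) \<longleftrightarrow>
    j < r \<and> Suc i < k j \<and> j' = j \<and> (i' = i \<or> i' = Suc i)"
  unfolding G1E_def sym_rel_def G1A_def by auto

lemma G1E_WP: "G1E r k (GW j) (GP j' i') \<longleftrightarrow>
    j < r \<and> ((j' = j \<and> i' = k j - 1) \<or> (j' = Suc j mod r \<and> i' = 0))"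
  unfolding G1E_def sym_rel_def G1A_def by auto

lemma G1E_PW: "G1E r k (GP j' i') (GW j) \<longleftrightarrow>
    j < r \<and> ((j' = j \<and> i' = k j - 1) \<or> (j' = Suc j mod r \<and> i' = 0))"
  unfolding G1E_def sym_rel_def G1A_def by auto

lemma G1E_commute: "G1E r k a b \<longleftrightarrow> G1E r k b a"
  unfolding G1E_def sym_rel_def by blast

lemma G1E_other: "\<not> G1E r k (GU j i) (GU j' i')" "\<not> G1E r k (GU j i) (GW j')"
   "\<not> G1E r k (GW j') (GU j i)" "\<not> G1E r k (GW j) (GW j')"
  unfolding G1E_def sym_rel_def G1A_def by auto

context
  fixes r :: nat and k :: "nat \<Rightarrow> nat"
  assumes kpos: "\<forall>j<r. 1 \<le> k j"
begin

lemma unit_last_iff: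
  assumes "i < k j"
  shows "(\<exists>j'<r. Suc (unit_start k j + i) = unit_start k (Suc j')) \<longleftrightarrow> (j < r \<and> Suc i = k j)"
proof
  assume "\<exists>j'<r. Suc (unit_start k j + i) = unit_start k (Suc j')"
  then obtain j' where j': "j' < r" "Suc (unit_start k j + i) = unit_start k j' + k j'"
    using unit_start_Suc by metis
  then have "0 < k j'" using kpos by auto
  then have "unit_start k j + i = unit_start k j' + (k j' - 1)" "k j' - 1 < k j'" using j'
    by simp_all
  then show "j < r \<and> Suc i = k j" using unit_start_pos_unique[of i k j "k j' - 1" j', OF assms] j'
    by auto
next
  assume "j < r \<and> Suc i = k j"
  then show "\<exists>j'<r. Suc (unit_start k j + i) = unit_start k (Suc j')" using unit_start_Suc by auto
qed

lemma unit_start_pos_less: "j < r \<Longrightarrow> i < k j \<Longrightarrow> unit_start k j + i < unit_start k r"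
proof -
  assume "j < r" "i < k j"
  then have "unit_start k (Suc j) \<le> unit_start k r" by (intro unit_start_mono) simp
  then show ?thesis using \<open>i < k j\<close> unit_start_Suc[of k j] by simp
qed

lemma G1_tri_step_iff:
  assumes j: "j < r" "i < k j" and j': "j' < r" "i' < k j'"
  shows "(G1_tri r k (unit_start k j + i)
      \<and> unit_start k j' + i' = Suc (unit_start k j + i) mod unit_start k r)
    \<longleftrightarrow> (j' = j \<and> i' = Suc i \<and> Suc i < k j)"
proof
  assume H: "G1_tri r k (unit_start k j + i)
    \<and> unit_start k j' + i' = Suc (unit_start k j + i) mod unit_start k r"
  then have "Suc i \<noteq> k j" using unit_last_iff[of i j, OF j(2)] j unfolding G1_tri_def by auto
  then have si: "Suc i < k j" using j by simp
  then have "Suc (unit_start k j + i) < unit_start k r" using unit_start_pos_less[OF j(1) si]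
    by simp
  then have "unit_start k j' + i' = unit_start k j + Suc i" using H by simp
  then show "j' = j \<and> i' = Suc i \<and> Suc i < k j"
    using unit_start_pos_unique[of i' k j' "Suc i" j, OF j'(2) si] si by auto
next
  assume H: "j' = j \<and> i' = Suc i \<and> Suc i < k j"
  then have "\<not> (j < r \<and> Suc i = k j)" by simp
  then have "G1_tri r k (unit_start k j + i)" using unit_last_iff[of i j, OF j(2)]
    unfolding G1_tri_def by simp
  moreover have "Suc (unit_start k j + i) < unit_start k r"
    using unit_start_pos_less[OF j(1), of "Suc i"] H by simp
  ultimately show "G1_tri r k (unit_start k j + i)
      \<and> unit_start k j' + i' = Suc (unit_start k j + i) mod unit_start k r"
    using H by simp
qed

lemma G1_wrap_iff:
  assumes j: "j < r" and j': "j' < r" "i' < k j'"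
  shows "unit_start k j' + i' = Suc (unit_start k j + k j - 1) mod unit_start k r
    \<longleftrightarrow> j' = Suc j mod r \<and> i' = 0"
proof -
  have kj: "1 \<le> k j" using kpos j by simp
  have e: "Suc (unit_start k j + k j - 1) = unit_start k (Suc j)" using kj unit_start_Suc[of k j]
    by simp
  show ?thesis
  proof (cases "Suc j < r")
    case True
    have k1: "0 < k (Suc j)" using kpos True by auto
    have "unit_start k (Suc j) + 0 < unit_start k r" using unit_start_pos_less[OF True k1] .
    then have "Suc (unit_start k j + k j - 1) mod unit_start k r = unit_start k (Suc j) + 0" using e
      by simp
    then show ?thesis using unit_start_pos_unique[of i' k j' 0 "Suc j", OF j'(2) k1] True by auto
  next
    case False
    then have "Suc j = r" using j by simp
    then have "Suc (unit_start k j + k j - 1) mod unit_start k r = unit_start k 0 + 0" using e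
      by simp
    moreover have k0: "0 < k 0" using kpos j by auto
    ultimately show ?thesis using unit_start_pos_unique[of i' k j' 0 0, OF j'(2) k0] \<open>Suc j = r\<close>
      by auto
  qed
qed

lemma inj_on_G1_embed: "inj_on (G1_embed k) (G1V r k)"
proof (rule inj_onI)
  fix a b assume a: "a \<in> G1V r k" and b: "b \<in> G1V r k" and eq: "G1_embed k a = G1_embed k b"
  from a b show "a = b" unfolding G1V_def
  proof (elim UnE CollectE exE conjE)
    fix j i j' i' assume "a = GP j i" "b = GP j' i'" "i < k j" "i' < k j'"
    moreover have "unit_start k j + i = unit_start k j' + i'" using eq \<open>a = GP j i\<close> \<open>b = GP j' i'\<close>
      unfolding G1_embed_def by simp
    ultimately show "a = b" using unit_start_pos_unique[of i k j i' j'] by simp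
  next
    fix j i j' i' assume "a = GU j i" "b = GU j' i'" "Suc i < k j" "Suc i' < k j'"
    moreover have "unit_start k j + i = unit_start k j' + i'" using eq \<open>a = GU j i\<close> \<open>b = GU j' i'\<close>
      unfolding G1_embed_def by simp
    ultimately show "a = b" using unit_start_pos_unique[of i k j i' j'] by simp
  next
    fix j j' assume "a = GW j" "b = GW j'" "j < r" "j' < r"
    moreover have kj: "0 < k j" "0 < k j'" using kpos \<open>j < r\<close> \<open>j' < r\<close> by auto
    ultimately have "unit_start k j + (k j - 1) = unit_start k j' + (k j' - 1)" using eq
      unfolding G1_embed_def by simp
    then have "j = j'" using unit_start_pos_unique[of "k j - 1" k j "k j' - 1" j'] kj by simp
    then show "a = b" using \<open>a = GW j\<close> \<open>b = GW j'\<close> by simp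
  next
    fix j i j' assume "a = GU j i" "b = GW j'" "Suc i < k j" "j' < r"
    moreover have kj: "0 < k j'" using kpos \<open>j' < r\<close> by auto
    ultimately have "unit_start k j + i = unit_start k j' + (k j' - 1)" using eq
      unfolding G1_embed_def by simp
    then have "j = j' \<and> i = k j' - 1"
      using unit_start_pos_unique[of i k j "k j' - 1" j'] kj \<open>Suc i < k j\<close> by simp
    then show "a = b" using \<open>Suc i < k j\<close> by simp
  next
    fix j i j' assume "b = GU j i" "a = GW j'" "Suc i < k j" "j' < r"
    moreover have kj: "0 < k j'" using kpos \<open>j' < r\<close> by auto
    ultimately have "unit_start k j + i = unit_start k j' + (k j' - 1)" using eq
      unfolding G1_embed_def by simp
    then have "j = j' \<and> i = k j' - 1"
      using unit_start_pos_unique[of i k j "k j' - 1" j'] kj \<open>Suc i < k j\<close> by simp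
    then show "a = b" using \<open>Suc i < k j\<close> by simp
  qed (use eq in \<open>auto simp: G1_embed_def\<close>)
qed

lemma G1_embed_image: "G1_embed k ` G1V r k = ear_cycleV (unit_start k r)"
proof
  have "unit_start k j + i < unit_start k r" if "j < r" "Suc i < k j" for j i
    using unit_start_pos_less that by simp
  moreover have "unit_start k j + (k j - 1) < unit_start k r" if "j < r" for j
    using unit_start_pos_less[OF that, of "k j - 1"] kpos[rule_format, OF that] by simp
  ultimately show "G1_embed k ` G1V r k \<subseteq> ear_cycleV (unit_start k r)"
    unfolding G1V_def ear_cycleV_def by (auto simp: G1_embed_def unit_start_pos_less)
  show "ear_cycleV (unit_start k r) \<subseteq> G1_embed k ` G1V r k"
  proof
    fix y assume "y \<in> ear_cycleV (unit_start k r)"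
    then obtain p where p: "p < unit_start k r" "y = GP 0 p \<or> y = GU 0 p" unfolding ear_cycleV_def
      by blast
    obtain j where j: "j < r" "unit_start k j \<le> p" "p < unit_start k (Suc j)"
      using unit_start_pos_exists[OF p(1)] by blast
    define i where "i = p - unit_start k j"
    have pi: "p = unit_start k j + i" "i < k j" using j unit_start_Suc[of k j] unfolding i_def
      by auto
    from p(2) show "y \<in> G1_embed k ` G1V r k"
    proof
      assume "y = GP 0 p"
      then have "y = G1_embed k (GP j i)" "GP j i \<in> G1V r k" using pi j
        unfolding G1_embed_def G1V_def by auto
      then show ?thesis by blast
    next
      assume y: "y = GU 0 p"
      show ?thesis
      proof (cases "Suc i < k j")
        case True
        then have "y = G1_embed k (GU j i)" "GU j i \<in> G1V r k" using pi j y
          unfolding G1_embed_def G1V_def by auto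
        then show ?thesis by blast
      next
        case False
        then have "i = k j - 1" using pi by simp
        then have "y = G1_embed k (GW j)" "GW j \<in> G1V r k" using pi j y
          unfolding G1_embed_def G1V_def by auto
        then show ?thesis by blast
      qed
    qed
  qed
qed

lemma bij_G1_embed: "bij_betw (G1_embed k) (G1V r k) (ear_cycleV (unit_start k r))"
  unfolding bij_betw_def using inj_on_G1_embed G1_embed_image by blast

lemma G1_embed_PP:
  assumes "j < r" "i < k j" "j' < r" "i' < k j'"
  shows "ear_cycleE (unit_start k r) (G1_tri r k) (G1_embed k (GP j i)) (G1_embed k (GP j' i'))
    \<longleftrightarrow> G1E r k (GP j i) (GP j' i')"
proof -
  let ?p = "unit_start k j + i" and ?q = "unit_start k j' + i'" and ?m = "unit_start k r"
  have "ear_cycleE ?m (G1_tri r k) (GP 0 ?p) (GP 0 ?q) \<longleftrightarrow>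
     (G1_tri r k ?p \<and> ?q = Suc ?p mod ?m) \<or> (G1_tri r k ?q \<and> ?p = Suc ?q mod ?m)"
    using ear_cycleE_PP[OF unit_start_pos_less unit_start_pos_less] assms by simp
  also have "\<dots> \<longleftrightarrow> (j' = j \<and> i' = Suc i \<and> Suc i < k j) \<or> (j = j' \<and> i = Suc i' \<and> Suc i' < k j')"
    using G1_tri_step_iff[of j i j' i'] G1_tri_step_iff[of j' i' j i] assms by simp
  also have "\<dots> \<longleftrightarrow> G1E r k (GP j i) (GP j' i')" using assms G1E_PP by auto
  finally show ?thesis by (simp add: G1_embed_def)
qed

lemma G1_embed_UP:
  assumes "j < r" "Suc i < k j" "j' < r" "i' < k j'"
  shows "ear_cycleE (unit_start k r) (G1_tri r k) (G1_embed k (GU j i)) (G1_embed k (GP j' i'))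
    \<longleftrightarrow> G1E r k (GU j i) (GP j' i')"
proof -
  have "Suc (unit_start k j + i) < unit_start k r" using unit_start_pos_less[OF assms(1,2)] by simp
  then have "ear_cycleE (unit_start k r) (G1_tri r k) (G1_embed k (GU j i)) (G1_embed k (GP j' i'))
      \<longleftrightarrow> unit_start k j' + i' = unit_start k j + i \<or> unit_start k j' + i' = unit_start k j + Suc i"
    by (auto simp: G1_embed_def ear_cycleE_UP)
  also have "\<dots> \<longleftrightarrow> j' = j \<and> (i' = i \<or> i' = Suc i)"
    using unit_start_pos_unique[of i' k j' i j] unit_start_pos_unique[of i' k j' "Suc i" j] assms
      by auto
  finally show ?thesis using assms G1E_UP by auto
qed

lemma G1_embed_WP:
  assumes "j < r" "j' < r" "i' < k j'"
  shows "ear_cycleE (unit_start k r) (G1_tri r k) (G1_embed k (GW j)) (G1_embed k (GP j' i'))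
    \<longleftrightarrow> G1E r k (GW j) (GP j' i')"
proof -
  have kj: "0 < k j" using kpos assms by auto
  have "unit_start k j + (k j - 1) < unit_start k r"
    using unit_start_pos_less[OF assms(1), of "k j - 1"] kj by simp
  then have "ear_cycleE (unit_start k r) (G1_tri r k) (G1_embed k (GW j)) (G1_embed k (GP j' i'))
      \<longleftrightarrow> unit_start k j' + i' = unit_start k j + (k j - 1)
        \<or> unit_start k j' + i' = Suc (unit_start k j + k j - 1) mod unit_start k r"
    using kj by (auto simp: G1_embed_def ear_cycleE_UP)
  also have "\<dots> \<longleftrightarrow> (j' = j \<and> i' = k j - 1) \<or> (j' = Suc j mod r \<and> i' = 0)"
    using unit_start_pos_unique[of i' k j' "k j - 1" j] G1_wrap_iff[OF assms] assms kj by auto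
  finally show ?thesis using assms G1E_WP by auto
qed

lemma graph_iso_G1_ear_cycle:
  "graph_iso (G1V r k) (G1E r k)
    (ear_cycleV (unit_start k r)) (ear_cycleE (unit_start k r) (G1_tri r k))"
  unfolding graph_iso_def
proof (intro exI conjI ballI)
  show "bij_betw (G1_embed k) (G1V r k) (ear_cycleV (unit_start k r))" by (rule bij_G1_embed)
  let ?E' = "ear_cycleE (unit_start k r) (G1_tri r k)"
  have to_GP: "G1E r k a b \<longleftrightarrow> ?E' (G1_embed k a) (G1_embed k b)"
    if "a \<in> G1V r k" "b \<in> G1V r k" "b \<in> range (case_prod GP)" for a b
    using that unfolding G1V_def
    by (elim UnE CollectE exE conjE imageE)
      (auto simp: G1_embed_PP G1_embed_UP G1_embed_WP split: prod.splits)
  fix a b assume ab: "a \<in> G1V r k" "b \<in> G1V r k"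
  consider "b \<in> range (case_prod GP)" | "a \<in> range (case_prod GP)"
    | "a \<notin> range (case_prod GP)" "b \<notin> range (case_prod GP)" by blast
  then show "G1E r k a b \<longleftrightarrow> ?E' (G1_embed k a) (G1_embed k b)"
  proof cases
    case 2
    then show ?thesis using to_GP[of b a] ab G1E_commute ear_cycleE_commute by metis
  next
    case 3
    then have "\<not> G1E r k a b" "\<not> ?E' (G1_embed k a) (G1_embed k b)"
      using ab unfolding G1V_def by (auto simp: G1E_other ear_cycleE_UU G1_embed_def)
    then show ?thesis by simp
  qed (use to_GP ab in blast)
qed

end

lemma G3_eq_ear_cycle: "G3V q = ear_cycleV (2 * q)" "G3E q = ear_cycleE (2 * q) (\<lambda>_. True)"
proof -
  show "G3V q = ear_cycleV (2 * q)" unfolding G3V_def ear_cycleV_def by simp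
  have "G3A q = ear_cycleA (2 * q) (\<lambda>_. True)" unfolding G3A_def ear_cycleA_def by (intro ext) simp
  then show "G3E q = ear_cycleE (2 * q) (\<lambda>_. True)" unfolding G3E_def ear_cycleE_def by simp
qed

lemma G2_eq_G1: "G2V k = G1V 1 (\<lambda>_. k)" "G2E k = G1E 1 (\<lambda>_. k)"
proof -
  show "G2V k = G1V 1 (\<lambda>_. k)" unfolding G2V_def G1V_def by auto
  have "G2A k = G1A 1 (\<lambda>_. k)" unfolding G2A_def G1A_def by (intro ext) auto
  then show "G2E k = G1E 1 (\<lambda>_. k)" unfolding G2E_def G1E_def by simp
qed

lemma G1_tri_beyond:
  assumes "unit_start k r \<le> p" shows "G1_tri r k p"
  unfolding G1_tri_def
proof
  assume "\<exists>j<r. Suc p = unit_start k (Suc j)"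
  then obtain j where "j < r" "Suc p = unit_start k (Suc j)" by blast
  then show False using unit_start_mono[of "Suc j" r k] assms by simp
qed

lemma
  assumes "unit_start k r \<le> m"
  shows unit_start_append: "unit_start (k(r := m - unit_start k r)) (Suc r) = m"
    and G1_tri_append: "G1_tri (Suc r) (k(r := m - unit_start k r)) p \<longleftrightarrow> G1_tri r k p \<and> Suc p \<noteq> m"
proof -
  let ?k = "k(r := m - unit_start k r)"
  have same: "unit_start ?k j = unit_start k j" if "j \<le> r" for j
    unfolding unit_start_def using that by (intro sum.cong) auto
  show last: "unit_start ?k (Suc r) = m" using unit_start_Suc[of ?k r] same[of r] assms by simp
  have "(\<exists>j<Suc r. Suc p = unit_start ?k (Suc j))
      \<longleftrightarrow> (\<exists>j<r. Suc p = unit_start ?k (Suc j)) \<or> Suc p = unit_start ?k (Suc r)"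
    by (auto simp: less_Suc_eq)
  also have "\<dots> \<longleftrightarrow> (\<exists>j<r. Suc p = unit_start k (Suc j)) \<or> Suc p = m"
    using same last by auto
  finally show "G1_tri (Suc r) ?k p \<longleftrightarrow> G1_tri r k p \<and> Suc p \<noteq> m" unfolding G1_tri_def by simp
qed

text \<open>Cut the cycle after every position \<open>p\<close> without a cycle edge \<open>x\<^sub>p x\<^sub>p\<^sub>+\<^sub>1\<close>; the pieces
  are the units.\<close>

lemma tri_decompose_units:
  assumes "m = 0 \<or> \<not> tri (m - 1)"
  shows "\<exists>r k. (\<forall>j<r. 1 \<le> k j) \<and> unit_start k r = m \<and> (\<forall>p<m. tri p = G1_tri r k p)"
  using assms
proof (induction m rule: less_induct)
  case (less m)
  show ?case
  proof (cases "m = 0")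
    case False
    define B where "B = {p. p < m - 1 \<and> \<not> tri p}"
    define m' where "m' = (if B = {} then 0 else Suc (Max B))"
    have "finite B" unfolding B_def by simp
    have "m' < m \<and> (m' = 0 \<or> \<not> tri (m' - 1))"
    proof (cases "B = {}")
      case nonempty: False
      then have "Max B \<in> B" using \<open>finite B\<close> by (rule Max_in[rotated])
      then have "Max B < m - 1" "\<not> tri (Max B)" unfolding B_def by auto
      moreover have "m' = Suc (Max B)" using nonempty m'_def by simp
      ultimately show ?thesis by auto
    qed (use False m'_def in simp)
    then have m': "m' < m" "m' = 0 \<or> \<not> tri (m' - 1)" by auto
    have above: "tri p" if "m' \<le> p" "p < m - 1" for p
    proof (rule ccontr)
      assume "\<not> tri p"
      then have "p \<in> B" using that(2) unfolding B_def by simp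
      then show False using Max_ge[OF \<open>finite B\<close> \<open>p \<in> B\<close>] that(1) unfolding m'_def
        by (auto split: if_splits)
    qed
    obtain r k where IH: "\<forall>j<r. 1 \<le> k j" "unit_start k r = m'" "\<forall>p<m'. tri p = G1_tri r k p"
      using less.IH[OF m'] by blast
    let ?k = "k(r := m - m')"
    have "tri p = G1_tri (Suc r) ?k p" if p: "p < m" for p
    proof -
      have append: "G1_tri (Suc r) ?k p \<longleftrightarrow> G1_tri r k p \<and> Suc p \<noteq> m"
        using G1_tri_append[of k r m] IH(2) m'(1) by simp
      consider "p < m'" | "m' \<le> p" "p < m - 1" | "p = m - 1" using p by linarith
      then show ?thesis
      proof cases
        case 1 then show ?thesis using IH(3) append m'(1) by auto
      next
        case 2 then show ?thesis using above G1_tri_beyond[of k r p] IH(2) append by auto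
      next
        case 3 then show ?thesis using less.prems False append by auto
      qed
    qed
    then have "\<forall>p<m. tri p = G1_tri (Suc r) ?k p" by blast
    moreover have "\<forall>j<Suc r. 1 \<le> ?k j" using IH(1) m'(1) by (auto simp: less_Suc_eq)
    ultimately show ?thesis using unit_start_append[of k r m] IH(2) m'(1) by (metis less_imp_le)
  qed (auto intro: exI[of _ 0])
qed

lemma ear_cycle_in_family_G:
  assumes iso: "graph_iso V E (ear_cycleV m) (ear_cycleE m tri)" and ev: "even m" and m2: "2 \<le> m"
    and c: "\<not> tri (m - 1) \<or> (m \<noteq> 2 \<and> (\<forall>i<m. tri i))"
  shows "in_family_G V E"
  using c
proof
  assume nt: "\<not> tri (m - 1)"
  obtain r k where rk: "\<forall>j<r. 1 \<le> k j" "unit_start k r = m" "\<forall>p<m. tri p = G1_tri r k p"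
    using tri_decompose_units[of m tri] nt by blast
  have "r \<noteq> 0" using rk(2) m2 by (cases r) auto
  have ce: "ear_cycleE m tri = ear_cycleE m (G1_tri r k)" using rk(3) by (rule ear_cycleE_cong)
  have "graph_iso (G1V r k) (G1E r k)
      (ear_cycleV (unit_start k r)) (ear_cycleE (unit_start k r) (G1_tri r k))"
    using rk(1) by (rule graph_iso_G1_ear_cycle)
  then have "graph_iso (ear_cycleV m) (ear_cycleE m (G1_tri r k)) (G1V r k) (G1E r k)"
    using rk(2) by (simp add: graph_iso_sym)
  then have gi: "graph_iso V E (G1V r k) (G1E r k)" using graph_iso_trans[OF iso] ce by simp
  have "even (\<Sum>j<r. k j)" using rk(2) ev unfolding unit_start_def by simp
  then have "\<exists>r k. r \<ge> 1 \<and> (\<forall>j<r. k j \<ge> 1) \<and> even (\<Sum>j<r. k j) \<and> graph_iso V E (G1V r k) (G1E r k)"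
    using \<open>r \<noteq> 0\<close> rk(1) gi by (intro exI[of _ r] exI[of _ k]) simp
  then show ?thesis unfolding in_family_G_def by (rule disjI1)
next
  assume H: "m \<noteq> 2 \<and> (\<forall>i<m. tri i)"
  define q where "q = m div 2"
  have mq: "m = 2 * q" using ev unfolding q_def by simp
  have q2: "2 \<le> q" using mq H m2 by simp
  have "ear_cycleE m tri = ear_cycleE m (\<lambda>_. True)" using H by (intro ear_cycleE_cong) auto
  then have "graph_iso V E (G3V q) (G3E q)" using iso mq by (simp add: G3_eq_ear_cycle)
  then have "\<exists>q. q \<ge> 2 \<and> graph_iso V E (G3V q) (G3E q)" using q2 by blast
  then show ?thesis unfolding in_family_G_def by (intro disjI2)
qed

lemma in_family_G_ear_cycle:
  assumes "in_family_G V E"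
  shows "\<exists>m tri. even m \<and> graph_iso V E (ear_cycleV m) (ear_cycleE m tri)"
proof -
  have G1: "\<exists>m tri. even m \<and> graph_iso V E (ear_cycleV m) (ear_cycleE m tri)"
    if r: "\<forall>j<r. k j \<ge> 1" "even (\<Sum>j<r. k j)" "graph_iso V E (G1V r k) (G1E r k)" for r k
  proof -
    have "graph_iso V E (ear_cycleV (unit_start k r)) (ear_cycleE (unit_start k r) (G1_tri r k))"
      using graph_iso_trans[OF r(3) graph_iso_G1_ear_cycle] r(1) by blast
    moreover have "even (unit_start k r)" using r(2) unfolding unit_start_def .
    ultimately show ?thesis by blast
  qed
  from assms show ?thesis unfolding in_family_G_def
  proof (elim disjE exE conjE)
    fix k :: nat assume "2 \<le> k" "even k" "graph_iso V E (G2V k) (G2E k)"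
    then show ?thesis using G1[of 1 "\<lambda>_. k"] G2_eq_G1 by simp
  next
    fix q :: nat assume "graph_iso V E (G3V q) (G3E q)"
    then show ?thesis using G3_eq_ear_cycle by (intro exI[of _ "2 * q"] exI[of _ "\<lambda>_. True"]) auto
  qed (use G1 in blast)
qed
definition other :: "'a set \<Rightarrow> 'a \<Rightarrow> 'a" where
  "other A a = (THE b. b \<in> A \<and> b \<noteq> a)"

lemma
  assumes "card A = 2" "a \<in> A"
  shows other_mem: "other A a \<in> A" and other_neq: "other A a \<noteq> a"
    and mem_eq_or_other: "\<And>b. b \<in> A \<Longrightarrow> b = a \<or> b = other A a"
proof -
  obtain x y where A: "A = {x,y}" "x \<noteq> y" using assms(1) by (auto simp: card_2_iff)
  have "\<exists>!b. b \<in> A \<and> b \<noteq> a" using A assms(2) by auto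
  then have th: "other A a \<in> A \<and> other A a \<noteq> a" unfolding other_def by (rule theI')
  then show "other A a \<in> A" "other A a \<noteq> a" by auto
  fix b assume "b \<in> A" then show "b = a \<or> b = other A a" using th A assms(2) by auto
qed

primrec alt_walk :: "('a \<Rightarrow> 'a set) \<Rightarrow> ('a \<Rightarrow> 'a set) \<Rightarrow> 'a \<times> 'a \<Rightarrow> nat \<Rightarrow> 'a \<times> 'a" where
  "alt_walk N M d 0 = d"
| "alt_walk N M d (Suc i) =
     (let (t, s) = alt_walk N M d i; t' = other (N s) t in (t', other (M t') s))"

locale alternating_walk = tight_oi2rd +
  fixes t0 s0
  assumes t0: "t0 \<in> V - S" and s0: "s0 \<in> S" and e0: "E s0 t0"
begin

definition "x i = fst (alt_walk nbr S_nbr (t0, s0) i)"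
definition "s i = snd (alt_walk nbr S_nbr (t0, s0) i)"

lemma x_0: "x 0 = t0" and s_0: "s 0 = s0" unfolding x_def s_def by auto

lemma x_Suc: "x (Suc i) = other (nbr (s i)) (x i)"
  unfolding x_def s_def by (simp add: Let_def split: prod.split)
lemma s_Suc: "s (Suc i) = other (S_nbr (x (Suc i))) (s i)"
  unfolding x_def s_def by (simp add: Let_def split: prod.split)

lemma walk_invariant: "x i \<in> V - S \<and> s i \<in> S \<and> E (s i) (x i)"
proof (induction i)
  case 0 then show ?case using t0 s0 e0 x_0 s_0 by simp
next
  case (Suc i)
  then have xi: "x i \<in> nbr (s i)" unfolding nbr_def by (auto dest: in_V)
  have n2: "card (nbr (s i)) = 2" using Suc card_nbr by blast
  have x1: "x (Suc i) \<in> nbr (s i)" using other_mem[OF n2 xi] x_Suc by simp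
  then have x1T: "x (Suc i) \<in> V - S" using nbr_outside_S Suc by blast
  have "s i \<in> S_nbr (x (Suc i))" using x1 Suc unfolding S_nbr_def nbr_def by auto
  then have "s (Suc i) \<in> S_nbr (x (Suc i))" using other_mem[OF card_S_nbr[OF x1T]] s_Suc by simp
  then show ?case using x1T unfolding S_nbr_def by auto
qed

lemma x_outside_S: "x i \<in> V - S" and s_in_S: "s i \<in> S" and E_s_x: "E (s i) (x i)"
  using walk_invariant by auto

lemma E_s_x_Suc: "E (s i) (x (Suc i))" and x_Suc_neq: "x (Suc i) \<noteq> x i"
proof -
  have xi: "x i \<in> nbr (s i)" using E_s_x x_outside_S unfolding nbr_def by auto
  have n2: "card (nbr (s i)) = 2" using s_in_S card_nbr by blast
  show "E (s i) (x (Suc i))" using other_mem[OF n2 xi] x_Suc unfolding nbr_def by simp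
  show "x (Suc i) \<noteq> x i" using other_neq[OF n2 xi] x_Suc by simp
qed

lemma s_Suc_neq: "s (Suc i) \<noteq> s i"
proof -
  have "s i \<in> S_nbr (x (Suc i))" using E_s_x_Suc s_in_S unfolding S_nbr_def by auto
  then show ?thesis using other_neq[OF card_S_nbr[OF x_outside_S]] s_Suc by simp
qed

lemma nbr_s_cases: "E (s i) u \<Longrightarrow> u = x i \<or> u = x (Suc i)"
proof -
  assume e: "E (s i) u"
  have xi: "x i \<in> nbr (s i)" using E_s_x x_outside_S unfolding nbr_def by auto
  have n2: "card (nbr (s i)) = 2" using s_in_S card_nbr by blast
  have "u \<in> nbr (s i)" using e unfolding nbr_def by (auto dest: in_V)
  then show ?thesis using mem_eq_or_other[OF n2 xi] x_Suc by auto
qed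

lemma S_nbr_x_Suc_cases: "a \<in> S \<Longrightarrow> E a (x (Suc i)) \<Longrightarrow> a = s i \<or> a = s (Suc i)"
proof -
  assume a: "a \<in> S" "E a (x (Suc i))"
  have si: "s i \<in> S_nbr (x (Suc i))" using E_s_x_Suc s_in_S unfolding S_nbr_def by auto
  have "a \<in> S_nbr (x (Suc i))" using a unfolding S_nbr_def by auto
  then show ?thesis using mem_eq_or_other[OF card_S_nbr[OF x_outside_S] si] s_Suc by auto
qed

text \<open>The first repetition of a \<open>T\<close>-vertex; \<open>x_period\<close> shows that it is a return to \<open>x 0\<close>, because
  the two \<open>S\<close>-neighbours of an earlier vertex are already used by the walk.\<close>

definition "m = (LEAST j. 0 < j \<and> (\<exists>i<j. x i = x j))"

lemma x_repeats: "\<exists>j. 0 < j \<and> (\<exists>i<j. x i = x j)"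
proof (rule ccontr)
  assume H: "\<not> ?thesis"
  let ?K = "card (V - S)"
  have "inj_on x {..?K}"
  proof (rule inj_onI)
    fix a b assume "a \<in> {..?K}" "b \<in> {..?K}" "x a = x b"
    show "a = b"
    proof (rule ccontr)
      assume "a \<noteq> b"
      then have "a < b \<or> b < a" by arith
      then show False using H \<open>x a = x b\<close> by (metis not_less0 neq0_conv)
    qed
  qed
  moreover have "x ` {..?K} \<subseteq> V - S" using x_outside_S by blast
  ultimately have "card {..?K} \<le> ?K" using card_inj_on_le finite_V by blast
  then show False by simp
qed

lemma period_pos_repeat: "0 < m \<and> (\<exists>i<m. x i = x m)"
  unfolding m_def using x_repeats by (rule LeastI_ex)

lemma x_distinct_before_period: "j < m \<Longrightarrow> i < j \<Longrightarrow> x i \<noteq> x j"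
  using not_less_Least[of j "\<lambda>j. 0 < j \<and> (\<exists>i<j. x i = x j)"] unfolding m_def[symmetric] by auto

lemma x_inj: "i < m \<Longrightarrow> j < m \<Longrightarrow> x i = x j \<Longrightarrow> i = j"
  by (metis x_distinct_before_period nat_neq_iff)

lemma x_period: "x m = x 0"
proof -
  obtain p where mp: "m = Suc p" using period_pos_repeat by (metis gr0_implies_Suc)
  obtain i0 where i0: "i0 < m" "x i0 = x m" using period_pos_repeat by blast
  show ?thesis
  proof (cases i0)
    case 0 then show ?thesis using i0 by simp
  next
    case (Suc i)
    have sp: "s p \<in> S" "E (s p) (x (Suc i))" using s_in_S E_s_x_Suc[of p] mp i0 Suc by auto
    from S_nbr_x_Suc_cases[OF sp] show ?thesis
    proof
      assume "s p = s i"
      then have "x p = x i \<or> x p = x (Suc i)" using nbr_s_cases[of i "x p"] E_s_x[of p] by simp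
      moreover have "x p \<noteq> x (Suc i)" using x_Suc_neq[of p] i0 Suc mp by simp
      ultimately have "x p = x i" by simp
      then show ?thesis using x_inj[of p i] i0 Suc mp by simp
    next
      assume sps: "s p = s (Suc i)"
      then have "x p = x (Suc i) \<or> x p = x (Suc (Suc i))"
        using nbr_s_cases[of "Suc i" "x p"] E_s_x[of p] by simp
      moreover have "x p \<noteq> x (Suc i)" using x_Suc_neq[of p] i0 Suc mp by simp
      ultimately have xp: "x p = x (Suc (Suc i))" by simp
      show ?thesis
      proof (cases "Suc i = p")
        case True then show ?thesis using xp x_Suc_neq[of p] by simp
      next
        case False
        then have lt: "Suc i < p" using i0 Suc mp by simp
        show ?thesis
        proof (cases "Suc (Suc i) = p")
          case True then show ?thesis using sps s_Suc_neq[of "Suc i"] by simp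
        next
          case False
          then show ?thesis using x_inj[of p "Suc (Suc i)"] xp mp lt by simp
        qed
      qed
    qed
  qed
qed

lemma s_period: "s m = s 0"
proof -
  obtain p where mp: "m = Suc p" using period_pos_repeat by (metis gr0_implies_Suc)
  have "s p \<noteq> s 0"
  proof
    assume eq: "s p = s 0"
    then have "x p = x 0 \<or> x p = x 1" using nbr_s_cases[of 0 "x p"] E_s_x[of p] by simp
    moreover have "x p \<noteq> x 0" using x_Suc_neq[of p] x_period mp by simp
    ultimately have xp: "x p = x 1" by simp
    consider "p = 0" | "p = 1" | "1 < p" by arith
    then show False
    proof cases
      case 1 then show ?thesis using xp x_Suc_neq[of 0] by simp
    next
      case 2 then show ?thesis using eq s_Suc_neq[of 0] by simp
    next
      case 3 then show ?thesis using x_inj[of p 1] xp mp by simp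
    qed
  qed
  moreover have "s 0 = s p \<or> s 0 = s (Suc p)"
    using S_nbr_x_Suc_cases[of "s 0" p] s_in_S E_s_x[of 0] x_period mp by simp
  ultimately show ?thesis using mp by simp
qed

lemma alt_walk_period: "alt_walk nbr S_nbr (t0, s0) (i + m) = alt_walk nbr S_nbr (t0, s0) i"
proof (induction i)
  case 0
  have "alt_walk nbr S_nbr (t0, s0) m = (x m, s m)" unfolding x_def s_def by simp
  then show ?case using x_period s_period x_0 s_0 by simp
next
  case (Suc i) then show ?case by (simp add: Let_def)
qed

lemma x_mod: "x i = x (i mod m)" and s_mod: "s i = s (i mod m)"
proof -
  have "alt_walk nbr S_nbr (t0, s0) i = alt_walk nbr S_nbr (t0, s0) (i mod m)"
  proof (induction i rule: nat_less_induct)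
    case (1 n)
    show ?case
    proof (cases "n < m")
      case True then show ?thesis by simp
    next
      case False
      then have "n = (n - m) + m" by simp
      then have "alt_walk nbr S_nbr (t0, s0) n = alt_walk nbr S_nbr (t0, s0) (n - m)"
        using alt_walk_period by metis
      also have "\<dots> = alt_walk nbr S_nbr (t0, s0) ((n - m) mod m)" using 1 period_pos_repeat False
        by simp
      also have "(n - m) mod m = n mod m" using False by (simp add: mod_if)
      finally show ?thesis .
    qed
  qed
  then show "x i = x (i mod m)" "s i = s (i mod m)" unfolding x_def s_def by simp_all
qed

lemma two_le_period: "2 \<le> m"
proof (rule ccontr)
  assume "\<not> 2 \<le> m"
  then have "m = 1" using period_pos_repeat by simp
  then show False using x_period x_Suc_neq[of 0] by simp
qed

lemma x_eq_iff: "x a = x b \<longleftrightarrow> a mod m = b mod m"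
  using x_inj[of "a mod m" "b mod m"] period_pos_repeat x_mod[of a] x_mod[of b] by auto

lemma s_inj: "a < m \<Longrightarrow> b < m \<Longrightarrow> s a = s b \<Longrightarrow> a = b"
proof -
  have key: "a < b \<Longrightarrow> b < m \<Longrightarrow> s a \<noteq> s b" for a b
  proof
    assume ab: "a < b" "b < m" and eq: "s a = s b"
    have "x b = x a \<or> x b = x (Suc a)" using nbr_s_cases[of a "x b"] E_s_x[of b] eq by simp
    moreover have "x b \<noteq> x a" using x_inj[of a b] ab by auto
    ultimately have "x b = x (Suc a)" by simp
    then have b: "b = Suc a" using x_inj[of b "Suc a"] ab by simp
    have "x (Suc b) = x a \<or> x (Suc b) = x (Suc a)"
      using nbr_s_cases[of a "x (Suc b)"] E_s_x_Suc[of b] eq by simp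
    then have "x (Suc b) = x a" using x_Suc_neq[of b] b by auto
    then have "(Suc b) mod m = a mod m" using x_eq_iff by blast
    moreover have "Suc b \<noteq> m \<Longrightarrow> Suc b < m" using ab by simp
    ultimately have "Suc b = m \<and> a = 0" using ab by (cases "Suc b = m") auto
    then show False using eq b s_Suc_neq[of 0] by simp
  qed
  assume "a < m" "b < m" "s a = s b"
  then show "a = b" using key[of a b] key[of b a] by (metis nat_neq_iff)
qed

definition "walk_set = x ` {..<m} \<union> s ` {..<m}"

lemma x_in_walk_set: "x i \<in> walk_set" and s_in_walk_set: "s i \<in> walk_set"
  unfolding walk_set_def using x_mod[of i] s_mod[of i] period_pos_repeat by auto

lemma x_eq_x_pred: "x i = x (Suc (i + m - 1))"
  using x_mod[of i] x_mod[of "Suc (i + m - 1)"] period_pos_repeat by simp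

lemma S_nbr_x_cases: "a \<in> S \<Longrightarrow> E a (x i) \<Longrightarrow> a = s (i + m - 1) \<or> a = s (i + m)"
  using S_nbr_x_Suc_cases[of a "i + m - 1"] x_eq_x_pred[of i] period_pos_repeat by simp

lemma walk_set_closed: "a \<in> walk_set \<Longrightarrow> E a b \<Longrightarrow> b \<in> walk_set"
proof -
  assume a: "a \<in> walk_set" and e: "E a b"
  then obtain i where "a = x i \<or> a = s i" unfolding walk_set_def by blast
  then show "b \<in> walk_set"
  proof
    assume "a = s i"
    then show ?thesis using nbr_s_cases[of i b] e x_in_walk_set by auto
  next
    assume ax: "a = x i"
    show ?thesis
    proof (cases "b \<in> S")
      case True
      then show ?thesis using S_nbr_x_cases[of b i] e ax sym s_in_walk_set by auto
    next
      case False
      let ?a1 = "s (i + m - 1)" and ?a2 = "s (Suc (i + m - 1))"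
      have "E ?a1 (x i)" "E ?a2 (x i)"
        using E_s_x_Suc[of "i + m - 1"] E_s_x[of "Suc (i + m - 1)"] x_eq_x_pred[of i] by auto
      moreover have "?a1 \<noteq> ?a2" using s_Suc_neq by metis
      moreover have "b \<in> V - S" using False e in_V by auto
      ultimately have "E ?a1 b \<or> E ?a2 b"
        using claw_share[of "x i" b ?a1 ?a2] x_outside_S e ax s_in_S by blast
      then show ?thesis using nbr_s_cases x_in_walk_set by blast
    qed
  qed
qed

lemma V_eq_walk_set: "V = walk_set"
proof
  show "walk_set \<subseteq> V" unfolding walk_set_def using x_outside_S s_in_S S_subset by auto
  show "V \<subseteq> walk_set"
  proof
    fix v assume v: "v \<in> V"
    have "E\<^sup>*\<^sup>* (x 0) v" using connected v x_outside_S[of 0] unfolding connected_graph_def by blast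
    then show "v \<in> walk_set"
    proof (induction rule: rtranclp_induct)
      case base then show ?case using x_in_walk_set by blast
    next
      case (step y z) then show ?case using walk_set_closed by blast
    qed
  qed
qed

lemma f_x_Suc_neq: "f (x (Suc i)) \<noteq> f (x i)"
proof
  assume eq: "f (x (Suc i)) = f (x i)"
  have "nbr (s i) = {x i, x (Suc i)}" using nbr_s_cases E_s_x E_s_x_Suc x_outside_S
    unfolding nbr_def by auto
  then have "f (x i) = {1,2}" using nbr_rainbow[OF s_in_S, of i] eq by auto
  then show False using f_outside_S[OF x_outside_S[of i]] by auto
qed

lemma f_x_eq_iff_even: "f (x i) = f (x 0) \<longleftrightarrow> even i"
proof (induction i)
  case 0 then show ?case by simp
next
  case (Suc i)
  have "f (x (Suc i)) \<noteq> f (x i)" by (rule f_x_Suc_neq)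
  moreover have "f (x (Suc i)) = {1} \<or> f (x (Suc i)) = {2}" "f (x i) = {1} \<or> f (x i) = {2}"
    "f (x 0) = {1} \<or> f (x 0) = {2}" using f_outside_S x_outside_S by blast+
  ultimately show ?case using Suc by auto
qed

lemma even_period: "even m" using f_x_eq_iff_even[of m] x_period by simp

text \<open>For \<open>m = 2\<close> the pairs \<open>x\<^sub>0 x\<^sub>1\<close> and \<open>x\<^sub>1 x\<^sub>0\<close> coincide, so only the first may carry the
  cycle edge.\<close>

definition "tri i \<longleftrightarrow> E (x i) (x (Suc i)) \<and> (m = 2 \<longrightarrow> i = 0)"

lemma E_x_x_share_ear:
  assumes "E (x p) (x q)"
  obtains j where "x p = x j \<and> x q = x (Suc j) \<or> x q = x j \<and> x p = x (Suc j)"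
proof -
  let ?a1 = "s (p + m - 1)" and ?a2 = "s (Suc (p + m - 1))"
  have "E ?a1 (x p)" "E ?a2 (x p)"
    using E_s_x_Suc[of "p + m - 1"] E_s_x[of "Suc (p + m - 1)"] x_eq_x_pred[of p] by auto
  moreover have "?a1 \<noteq> ?a2" using s_Suc_neq by metis
  ultimately have "E ?a1 (x q) \<or> E ?a2 (x q)"
    using claw_share[of "x p" "x q" ?a1 ?a2] x_outside_S assms s_in_S by blast
  then obtain j where "E (s j) (x p)" "E (s j) (x q)"
    using \<open>E ?a1 (x p)\<close> \<open>E ?a2 (x p)\<close> by blast
  then have "(x p = x j \<or> x p = x (Suc j)) \<and> (x q = x j \<or> x q = x (Suc j))"
    using nbr_s_cases by blast
  moreover have "x p \<noteq> x q" using assms irrefl by auto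
  ultimately show ?thesis using that by auto
qed

lemma tri_if_E_x_Suc:
  assumes "p < m" "E (x p) (x (Suc p))"
  shows "tri p \<or> tri (Suc p mod m) \<and> p = Suc (Suc p mod m) mod m"
proof (cases "m = 2 \<and> p = 1")
  case True
  then have "x (Suc (Suc 0)) = x 0" using x_mod[of "Suc (Suc 0)"] by simp
  then have "tri 0" using assms True sym unfolding tri_def by auto
  then show ?thesis using True by simp
next
  case False then show ?thesis using assms unfolding tri_def by auto
qed

lemma E_x_x_iff:
  assumes pq: "p < m" "q < m"
  shows "E (x p) (x q) \<longleftrightarrow> (tri p \<and> q = Suc p mod m) \<or> (tri q \<and> p = Suc q mod m)"
proof
  assume "(tri p \<and> q = Suc p mod m) \<or> (tri q \<and> p = Suc q mod m)"
  then show "E (x p) (x q)"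
    using x_mod[of "Suc p"] x_mod[of "Suc q"] sym unfolding tri_def by auto
next
  assume e: "E (x p) (x q)"
  then obtain j where "x p = x j \<and> x q = x (Suc j) \<or> x q = x j \<and> x p = x (Suc j)"
    by (rule E_x_x_share_ear)
  then consider "q = Suc p mod m" | "p = Suc q mod m"
    using x_eq_iff pq by (metis mod_Suc_eq mod_less)
  then show "(tri p \<and> q = Suc p mod m) \<or> (tri q \<and> p = Suc q mod m)"
  proof cases
    case 1
    then have "E (x p) (x (Suc p))" using e x_mod[of "Suc p"] by simp
    then show ?thesis using tri_if_E_x_Suc[OF pq(1)] 1 by auto
  next
    case 2
    then have "E (x q) (x (Suc q))" using e sym x_mod[of "Suc q"] by metis
    then show ?thesis using tri_if_E_x_Suc[OF pq(2)] 2 by auto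
  qed
qed

lemma E_s_x_iff: "p < m \<Longrightarrow> q < m \<Longrightarrow> E (s p) (x q) \<longleftrightarrow> q = p \<or> q = Suc p mod m"
proof
  assume pq: "p < m" "q < m" and "E (s p) (x q)"
  then have "x q = x p \<or> x q = x (Suc p)" using nbr_s_cases by blast
  then show "q = p \<or> q = Suc p mod m" using x_eq_iff pq by auto
next
  assume pq: "p < m" "q < m" and d: "q = p \<or> q = Suc p mod m"
  from d show "E (s p) (x q)"
  proof
    assume "q = Suc p mod m"
    then have "x q = x (Suc p)" using x_mod[of "Suc p"] by simp
    then show ?thesis using E_s_x_Suc by simp
  qed (use E_s_x in simp)
qed

definition "walk_embed v = (case v of GP _ i \<Rightarrow> x i | GU _ i \<Rightarrow> s i | GW _ \<Rightarrow> x 0)"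

lemma bij_walk_embed: "bij_betw walk_embed (ear_cycleV m) V"
proof -
  have "inj_on walk_embed (ear_cycleV m)"
  proof (rule inj_onI)
    fix a b assume a: "a \<in> ear_cycleV m" and b: "b \<in> ear_cycleV m"
      and eq: "walk_embed a = walk_embed b"
    from a b show "a = b" unfolding ear_cycleV_def
    proof (elim UnE CollectE exE conjE)
      fix i j assume "a = GP 0 i" "i < m" "b = GP 0 j" "j < m"
      then show "a = b" using eq x_inj unfolding walk_embed_def by simp
    next
      fix i j assume "a = GU 0 i" "i < m" "b = GU 0 j" "j < m"
      then show "a = b" using eq s_inj unfolding walk_embed_def by simp
    next
      fix i j assume "a = GP 0 i" "b = GU 0 j"
      then show "a = b" using eq x_outside_S[of i] s_in_S[of j] unfolding walk_embed_def by auto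
    next
      fix i j assume "a = GU 0 i" "b = GP 0 j"
      then show "a = b" using eq x_outside_S[of j] s_in_S[of i] unfolding walk_embed_def by auto
    qed
  qed
  moreover have "walk_embed ` ear_cycleV m = V"
  proof -
    have "ear_cycleV m = (\<lambda>i. GP 0 i) ` {..<m} \<union> (\<lambda>i. GU 0 i) ` {..<m}" unfolding ear_cycleV_def
      by auto
    then have "walk_embed ` ear_cycleV m =
        (\<lambda>i. walk_embed (GP 0 i)) ` {..<m} \<union> (\<lambda>i. walk_embed (GU 0 i)) ` {..<m}"
      by (simp add: image_Un image_image)
    also have "\<dots> = walk_set" unfolding walk_set_def walk_embed_def by simp
    finally show ?thesis using V_eq_walk_set by simp
  qed
  ultimately show ?thesis unfolding bij_betw_def by blast
qed

lemma graph_iso_ear_cycle: "graph_iso V E (ear_cycleV m) (ear_cycleE m tri)"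
proof (rule graph_iso_by_inverse[OF bij_walk_embed], intro ballI)
  fix a b assume a: "a \<in> ear_cycleV m" and b: "b \<in> ear_cycleV m"
  from a b show "E (walk_embed a) (walk_embed b) \<longleftrightarrow> ear_cycleE m tri a b" unfolding ear_cycleV_def
  proof (elim UnE CollectE exE conjE)
    fix i j assume "a = GP 0 i" "i < m" "b = GP 0 j" "j < m"
    then show ?thesis using E_x_x_iff ear_cycleE_PP unfolding walk_embed_def by simp
  next
    fix i j assume "a = GU 0 i" "i < m" "b = GU 0 j" "j < m"
    then show ?thesis using S_independent s_in_S ear_cycleE_UU unfolding walk_embed_def by simp
  next
    fix i j assume "a = GP 0 i" "i < m" "b = GU 0 j" "j < m"
    then show ?thesis using E_s_x_iff ear_cycleE_PU sym unfolding walk_embed_def by (simp, metis)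
  next
    fix i j assume "a = GU 0 i" "i < m" "b = GP 0 j" "j < m"
    then show ?thesis using E_s_x_iff ear_cycleE_UP unfolding walk_embed_def by simp
  qed
qed

lemma not_tri_last:
  assumes "a \<in> S" "E a t0" "a \<noteq> s0" "E a u" "u \<noteq> t0" "\<not> E u t0"
  shows "\<not> tri (m - 1)"
proof -
  obtain p where mp: "m = Suc p" using period_pos_repeat by (metis gr0_implies_Suc)
  have "a = s p \<or> a = s (Suc p)" using S_nbr_x_Suc_cases[of a p] assms x_period x_0 mp by simp
  then have "a = s p" using s_period s_0 assms mp by auto
  then have "u = x p" using nbr_s_cases[of p u] assms x_period x_0 mp by auto
  then show ?thesis using assms x_period x_0 mp unfolding tri_def by auto
qed

lemma tri_iff_if_ears_closed:
  assumes "\<forall>a\<in>S. \<forall>u v. E a u \<longrightarrow> E a v \<longrightarrow> u \<noteq> v \<longrightarrow> E u v"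
  shows "tri i \<longleftrightarrow> (m = 2 \<longrightarrow> i = 0)"
proof -
  have "E (s i) (x i) \<longrightarrow> E (s i) (x (Suc i)) \<longrightarrow> x i \<noteq> x (Suc i) \<longrightarrow> E (x i) (x (Suc i))"
    using assms s_in_S[of i] by blast
  then have "E (x i) (x (Suc i))" using E_s_x[of i] E_s_x_Suc[of i] x_Suc_neq[of i] by simp
  then show ?thesis unfolding tri_def by simp
qed

end
lemma (in tight_oi2rd) exists_outside_S: "\<exists>t. t \<in> V - S"
proof -
  obtain v where v: "v \<in> V" using connected unfolding connected_graph_def by blast
  show ?thesis
  proof (cases "v \<in> S")
    case True
    then obtain u where "u \<in> nbr v" using nbr_rainbow by fastforce
    then show ?thesis using nbr_outside_S True by blast
  qed (use v in blast)
qed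

lemma (in tight_oi2rd) tight_in_family_G: "in_family_G V E"
proof -
  have "\<exists>m tri. graph_iso V E (ear_cycleV m) (ear_cycleE m tri) \<and> even m \<and> 2 \<le> m
      \<and> (\<not> tri (m - 1) \<or> (m \<noteq> 2 \<and> (\<forall>i<m. tri i)))"
  proof (cases "\<exists>a\<in>S. \<exists>u v. E a u \<and> E a v \<and> u \<noteq> v \<and> \<not> E u v")
    case True
    \<comment> \<open>start the walk just after an ear that is not a triangle\<close>
    then obtain a u v where a: "a \<in> S" "E a u" "E a v" "u \<noteq> v" "\<not> E u v" by blast
    have u: "u \<in> V - S" using nbr_outside_S[of a u] a in_V unfolding nbr_def by auto
    have "a \<in> S_nbr u" using a unfolding S_nbr_def by simp
    then obtain s0 where s0: "s0 \<in> S_nbr u" "s0 \<noteq> a"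
      using other_mem other_neq card_S_nbr[OF u] by metis
    interpret w: alternating_walk V E f u s0
      by unfold_locales (use u s0 in \<open>auto simp: S_nbr_def\<close>)
    have "\<not> w.tri (w.m - 1)" using w.not_tri_last[of a v] a s0 sym by auto
    then show ?thesis using w.graph_iso_ear_cycle w.even_period w.two_le_period by blast
  next
    case False
    obtain t0 where t0: "t0 \<in> V - S" using exists_outside_S by blast
    then obtain s0 where s0: "s0 \<in> S_nbr t0" using card_S_nbr[OF t0] by fastforce
    interpret w: alternating_walk V E f t0 s0
      by unfold_locales (use t0 s0 in \<open>auto simp: S_nbr_def\<close>)
    have "w.tri i \<longleftrightarrow> (w.m = 2 \<longrightarrow> i = 0)" for i using w.tri_iff_if_ears_closed False by blast
    then have "\<not> w.tri (w.m - 1) \<or> (w.m \<noteq> 2 \<and> (\<forall>i<w.m. w.tri i))" by (cases "w.m = 2") auto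
    then show ?thesis using w.graph_iso_ear_cycle w.even_period w.two_le_period by blast
  qed
  then show ?thesis using ear_cycle_in_family_G by blast
qed

theorem theorem1:
  fixes V :: "'a set" and E :: "'a \<Rightarrow> 'a \<Rightarrow> bool"
  assumes "simple_graph V E" and "connected_graph V E" and "claw_free V E"
  shows "real (gamma_oir2 V E) \<ge> real (card V) / 2
     \<and> (real (gamma_oir2 V E) = real (card V) / 2 \<longleftrightarrow> in_family_G V E)"
proof -
  obtain f where f: "oi2rd V E f" "weight V f = gamma_oir2 V E" using gamma_oir2_attained by blast
  interpret claw_free_oi2rd V E f using assms f by unfold_locales
  have lower: "card V \<le> 2 * gamma_oir2 V E" using card_le_twice_weight f(2) by simp
  have "card V = 2 * gamma_oir2 V E \<longleftrightarrow> in_family_G V E"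
  proof
    assume "card V = 2 * gamma_oir2 V E"
    then interpret tight_oi2rd V E f using assms f by unfold_locales simp_all
    show "in_family_G V E" by (rule tight_in_family_G)
  next
    assume "in_family_G V E"
    then obtain m tri where m: "even m" and iso: "graph_iso V E (ear_cycleV m) (ear_cycleE m tri)"
      using in_family_G_ear_cycle by blast
    obtain g where "oi2rd V E g" "weight V g = m"
      using oi2rd_graph_iso_transfer[OF iso oi2rd_ear_cycle_label[OF m]] weight_ear_cycle_label
        by metis
    then have "gamma_oir2 V E \<le> m" using gamma_oir2_le by metis
    moreover have "card V = 2 * m" using graph_iso_card_eq[OF iso] card_ear_cycleV by simp
    ultimately show "card V = 2 * gamma_oir2 V E" using lower by simp
  qed
  then show ?thesis using lower by linarith
qed

end
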